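(* Let $F$ be a nondyadic nonarchimedean local field (so $2$ is a unit in its ring of integers $R$). Then for every positive integer $n$, $u^\ast_R(n) = 2n$; that is, the minimal rank of a primitively $n$-universal $R$-lattice is exactly $2n$.
   Context: $F$ is a nonarchimedean local field of characteristic not $2$ with ring of integers $R$. An $R$-lattice is a finitely generated $R$-submodule $L$ of a quadratic space $(V,B)$ over $F$, with $Q(v)=B(v,v)$; all lattices are assumed integral ($B(L,L)\subseteq R$) and nondegenerate (Gram matrix nonsingular). A representation of $L$ into $M$ is an $R$-linear map $\sigma:L\to M$ with $B(\sigma v,\sigma v')=B(v,v')$; it is primitive if $\sigma(L)$ is a direct summand of $M$. An $R$-lattice is primitively $n$-universal if it primitively represents every (integral, nondegenerate) $R$-lattice of rank $n$. $u^\ast_R(n)$ denotes the minimal rank of a primitively $n$-universal $R$-lattice. *)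

theory Defs
  imports "Jordan_Normal_Form.Determinant"
begin

(* Normalized discrete valuation on a field, given on nonzero elements
   (the value at 0 is irrelevant; it plays the role of +infinity). *)
definition discrete_valuation :: "('a::field \<Rightarrow> int) \<Rightarrow> bool" where
  "discrete_valuation v \<longleftrightarrow>
     (\<forall>x y. x \<noteq> 0 \<longrightarrow> y \<noteq> 0 \<longrightarrow> v (x * y) = v x + v y) \<and>
     (\<forall>x y. x \<noteq> 0 \<longrightarrow> y \<noteq> 0 \<longrightarrow> x + y \<noteq> 0 \<longrightarrow> min (v x) (v y) \<le> v (x + y)) \<and>
     (\<exists>p. p \<noteq> 0 \<and> v p = 1)"

definition vge :: "('a::field \<Rightarrow> int) \<Rightarrow> 'a \<Rightarrow> int \<Rightarrow> bool" where
  "vge v x N \<longleftrightarrow> x = 0 \<or> N \<le> v x"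

definition intR :: "('a::field \<Rightarrow> int) \<Rightarrow> 'a \<Rightarrow> bool" where
  "intR v x \<longleftrightarrow> vge v x 0"

definition val_complete :: "('a::field \<Rightarrow> int) \<Rightarrow> bool" where
  "val_complete v \<longleftrightarrow>
     (\<forall>s :: nat \<Rightarrow> 'a. (\<forall>N. \<exists>K. \<forall>i\<ge>K. \<forall>j\<ge>K. vge v (s i - s j) N) \<longrightarrow>
        (\<exists>l. \<forall>N. \<exists>K. \<forall>i\<ge>K. vge v (s i - l) N))"

(* the residue field R / pi R is finite *)
definition finite_residue_field :: "('a::field \<Rightarrow> int) \<Rightarrow> bool" where
  "finite_residue_field v \<longleftrightarrow>
     (\<exists>S. finite S \<and> (\<forall>x. intR v x \<longrightarrow> (\<exists>s\<in>S. intR v s \<and> vge v (x - s) 1)))"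

definition nonarch_local_field :: "('a::field \<Rightarrow> int) \<Rightarrow> bool" where
  "nonarch_local_field v \<longleftrightarrow> discrete_valuation v \<and> val_complete v \<and> finite_residue_field v"

definition nondyadic :: "('a::field \<Rightarrow> int) \<Rightarrow> bool" where
  "nondyadic v \<longleftrightarrow> (2::'a) \<noteq> 0 \<and> v 2 = 0"

(* An integral nondegenerate R-lattice of rank n, given by its Gram matrix
   with respect to an R-basis. *)
definition R_lattice :: "('a::field \<Rightarrow> int) \<Rightarrow> nat \<Rightarrow> 'a mat \<Rightarrow> bool" where
  "R_lattice v n A \<longleftrightarrow> A \<in> carrier_mat n n \<and> transpose_mat A = A \<and>
     (\<forall>i<n. \<forall>j<n. intR v (A $$ (i, j))) \<and> det A \<noteq> 0"

definition R_vecs :: "('a::field \<Rightarrow> int) \<Rightarrow> nat \<Rightarrow> 'a vec set" where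
  "R_vecs v m = {x \<in> carrier_vec m. \<forall>i<m. intR v (x $ i)}"

definition R_submodule :: "('a::field \<Rightarrow> int) \<Rightarrow> nat \<Rightarrow> 'a vec set \<Rightarrow> bool" where
  "R_submodule v m N \<longleftrightarrow> N \<subseteq> R_vecs v m \<and> 0\<^sub>v m \<in> N \<and>
     (\<forall>x\<in>N. \<forall>y\<in>N. x + y \<in> N) \<and> (\<forall>c x. intR v c \<longrightarrow> x \<in> N \<longrightarrow> c \<cdot>\<^sub>v x \<in> N)"

definition direct_summand :: "('a::field \<Rightarrow> int) \<Rightarrow> nat \<Rightarrow> 'a vec set \<Rightarrow> bool" where
  "direct_summand v m S \<longleftrightarrow> (\<exists>N. R_submodule v m N \<and> S \<inter> N = {0\<^sub>v m} \<and>
     R_vecs v m = {x + y | x y. x \<in> S \<and> y \<in> N})"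

(* A representation of L (Gram matrix A, rank n) into M (Gram matrix B, rank m):
   an R-linear map R^n \<rightarrow> R^m, i.e. an m x n matrix X over R, preserving B. *)
definition representation :: "('a::field \<Rightarrow> int) \<Rightarrow> 'a mat \<Rightarrow> 'a mat \<Rightarrow> 'a mat \<Rightarrow> bool" where
  "representation v A B X \<longleftrightarrow> X \<in> carrier_mat (dim_row B) (dim_row A) \<and>
     (\<forall>i<dim_row B. \<forall>j<dim_row A. intR v (X $$ (i, j))) \<and>
     transpose_mat X * B * X = A"

definition rep_image :: "('a::field \<Rightarrow> int) \<Rightarrow> 'a mat \<Rightarrow> 'a vec set" where
  "rep_image v X = {X *\<^sub>v c | c. c \<in> R_vecs v (dim_col X)}"

definition primitive_representation :: "('a::field \<Rightarrow> int) \<Rightarrow> 'a mat \<Rightarrow> 'a mat \<Rightarrow> 'a mat \<Rightarrow> bool" where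
  "primitive_representation v A B X \<longleftrightarrow> representation v A B X \<and>
     direct_summand v (dim_row B) (rep_image v X)"

definition prim_n_universal :: "('a::field \<Rightarrow> int) \<Rightarrow> nat \<Rightarrow> 'a mat \<Rightarrow> bool" where
  "prim_n_universal v n B \<longleftrightarrow>
     (\<forall>A. R_lattice v n A \<longrightarrow> (\<exists>X. primitive_representation v A B X))"

definition u_star :: "('a::field \<Rightarrow> int) \<Rightarrow> nat \<Rightarrow> nat" where
  "u_star v n = (LEAST m. \<exists>B. R_lattice v m B \<and> prim_n_universal v n B)"

end

(*
  Upper bound: the hyperbolic lattice H^n of rank 2n is primitively n-universal. Since 2 is a
  unit, every integral symmetric A splits as A = U + U^T with U upper triangular and integral,
  and the columns of [1; U] span a primitive sublattice of H^n with Gram matrix A.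

  Lower bound: let B (rank m, d = det B) be primitively n-universal, p a uniformizer and
  c = p d^2. A primitive representation X of c 1_n has an integral left inverse Y, and
  Z = adj(B) Y^T is a dual frame: X^T B Z = d 1_n. If m < 2n the 2n columns of X and Z are
  dependent, and such a dependency makes d^2/c = 1/p an eigenvalue of the integral matrix
  Z^T B Z. Eigenvalues of integral matrices are integral, a contradiction.
*)

theory Submission
  imports Defs
begin

lemma mult_mat_vec_zero:
  fixes A :: "'a::semiring_0 mat"
  shows "A \<in> carrier_mat k m \<Longrightarrow> A *\<^sub>v 0\<^sub>v m = 0\<^sub>v k"
  by (intro eq_vecI) (auto simp: scalar_prod_def)

lemma smult_mat_mult_mat_vec:
  fixes A :: "'a::comm_semiring_0 mat"
  assumes "A \<in> carrier_mat k n" "w \<in> carrier_vec n"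
  shows "(c \<cdot>\<^sub>m A) *\<^sub>v w = c \<cdot>\<^sub>v (A *\<^sub>v w)"
  using assms by (intro eq_vecI) (auto simp: scalar_prod_def sum_distrib_left ac_simps)

lemma mult_mat_vec_unit_vec:
  fixes A :: "'a::semiring_1 mat"
  assumes A: "A \<in> carrier_mat m n" and j: "j < n"
  shows "A *\<^sub>v unit_vec n j = col A j"
  by (rule eq_vecI) (use A j scalar_prod_right_unit[OF j] in auto)

lemma mat_eq_one_mat_if_fixes_unit_vecs:
  fixes A :: "'a::semiring_1 mat"
  assumes A: "A \<in> carrier_mat n n" and fixed: "\<And>j. j < n \<Longrightarrow> A *\<^sub>v unit_vec n j = unit_vec n j"
  shows "A = 1\<^sub>m n"
proof (rule mat_col_eqI)
  fix j assume "j < dim_col (1\<^sub>m n :: 'a mat)"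
  then show "col A j = col (1\<^sub>m n) j"
    using fixed mult_mat_vec_unit_vec[OF A] by simp
qed (use A in auto)

lemma smult_append_vec: "c \<cdot>\<^sub>v (x @\<^sub>v y) = (c \<cdot>\<^sub>v x) @\<^sub>v (c \<cdot>\<^sub>v y)"
  by (intro eq_vecI) auto

lemma col_append_rows:
  assumes "A \<in> carrier_mat n1 k" "B \<in> carrier_mat n2 k" "j < k"
  shows "col (A @\<^sub>r B) j = col A j @\<^sub>v col B j"
  using assms unfolding append_rows_def by (auto intro: col_four_block_mat)

lemma transpose_append_rows_mult_append_rows:
  fixes P Q R S :: "'a::comm_semiring_0 mat"
  assumes P: "P \<in> carrier_mat n1 k" and Q: "Q \<in> carrier_mat n2 k"
    and R: "R \<in> carrier_mat n1 l" and S: "S \<in> carrier_mat n2 l"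
  shows "transpose_mat (P @\<^sub>r Q) * (R @\<^sub>r S) = transpose_mat P * R + transpose_mat Q * S"
proof (rule eq_matI)
  fix i j assume "i < dim_row (transpose_mat P * R + transpose_mat Q * S)"
    and "j < dim_col (transpose_mat P * R + transpose_mat Q * S)"
  then have ij: "i < k" "j < l"
    using P Q R S by auto
  have PQ: "P @\<^sub>r Q \<in> carrier_mat (n1 + n2) k" and RS: "R @\<^sub>r S \<in> carrier_mat (n1 + n2) l"
    using P Q R S by auto
  have "(transpose_mat (P @\<^sub>r Q) * (R @\<^sub>r S)) $$ (i, j) = col (P @\<^sub>r Q) i \<bullet> col (R @\<^sub>r S) j"
    using PQ RS ij by simp
  also have "\<dots> = (col P i @\<^sub>v col Q i) \<bullet> (col R j @\<^sub>v col S j)"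
    using col_append_rows[OF P Q ij(1)] col_append_rows[OF R S ij(2)] by simp
  also have "\<dots> = col P i \<bullet> col R j + col Q i \<bullet> col S j"
    by (rule scalar_prod_append[of _ n1 _ n2]) (use P Q R S in auto)
  finally show "(transpose_mat (P @\<^sub>r Q) * (R @\<^sub>r S)) $$ (i, j) = (transpose_mat P * R + transpose_mat Q * S) $$ (i, j)"
    using P Q R S ij by simp
qed (use P Q R S in \<open>auto simp: append_rows_def\<close>)

lemma nontrivial_kernel_two_blocks:
  fixes X Z :: "'a::field mat"
  assumes X: "X \<in> carrier_mat m n1" and Z: "Z \<in> carrier_mat m n2" and wide: "m < n1 + n2"
  shows "\<exists>a \<in> carrier_vec n1. \<exists>b \<in> carrier_vec n2.
           (a \<noteq> 0\<^sub>v n1 \<or> b \<noteq> 0\<^sub>v n2) \<and> X *\<^sub>v a + Z *\<^sub>v b = 0\<^sub>v m"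
proof -
  define k where "k = n1 + n2 - m"
  define K where "K = four_block_mat X Z (0\<^sub>m k n1) (0\<^sub>m k n2)"
  have K: "K \<in> carrier_mat (n1 + n2) (n1 + n2)"
    using four_block_carrier_mat[OF X, of "0\<^sub>m k n2" k n2 Z "0\<^sub>m k n1"] wide
    unfolding K_def k_def by auto
  \<comment> \<open>the padding rows of \<open>K\<close> are zero, so it is singular\<close>
  have "multrow (n1 + n2 - 1) 0 K = K"
    using X Z K wide by (intro eq_matI) (auto simp: K_def k_def four_block_mat_def Let_def)
  then have "det K = 0"
    using det_multrow[OF _ K, of "n1 + n2 - 1" 0] wide by simp
  then obtain w where w: "w \<in> carrier_vec (n1 + n2)" "w \<noteq> 0\<^sub>v (n1 + n2)" "K *\<^sub>v w = 0\<^sub>v (n1 + n2)"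
    using det_0_iff_vec_prod_zero_field[OF K] by blast
  define a b where "a = vec_first w n1" and "b = vec_last w n2"
  have ab: "a \<in> carrier_vec n1" "b \<in> carrier_vec n2" and w_eq: "w = a @\<^sub>v b"
    using w(1) by (simp_all add: a_def b_def)
  have "K *\<^sub>v w = (X *\<^sub>v a + Z *\<^sub>v b) @\<^sub>v (0\<^sub>m k n1 *\<^sub>v a + 0\<^sub>m k n2 *\<^sub>v b)"
    unfolding K_def w_eq by (rule four_block_mat_mult_vec[OF X Z _ _ ab]) auto
  moreover have "0\<^sub>v (n1 + n2) = 0\<^sub>v m @\<^sub>v (0\<^sub>v k :: 'a vec)"
    using wide unfolding k_def by (intro eq_vecI) auto
  moreover have "X *\<^sub>v a + Z *\<^sub>v b \<in> carrier_vec m"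
    using X Z ab by simp
  ultimately have "X *\<^sub>v a + Z *\<^sub>v b = 0\<^sub>v m"
    using w(3) append_vec_eq[OF _ zero_carrier_vec] by metis
  moreover have "a \<noteq> 0\<^sub>v n1 \<or> b \<noteq> 0\<^sub>v n2"
    using w(2) w_eq by (auto simp: append_vec_def Let_def)
  ultimately show ?thesis
    using ab by blast
qed

lemma gram_nonsingular_mult_mat_vec_eq_0:
  fixes X B :: "'a::field mat"
  assumes X: "X \<in> carrier_mat m n" and B: "B \<in> carrier_mat m m"
    and nonsing: "det (transpose_mat X * B * X) \<noteq> 0"
    and w: "w \<in> carrier_vec n" and Xw: "X *\<^sub>v w = 0\<^sub>v m"
  shows "w = 0\<^sub>v n"
proof -
  have G: "transpose_mat X * B * X \<in> carrier_mat n n"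
    using X B by simp
  have "(transpose_mat X * B * X) *\<^sub>v w = (transpose_mat X * B) *\<^sub>v (X *\<^sub>v w)"
    by (rule assoc_mult_mat_vec) (use X B w in auto)
  also have "\<dots> = 0\<^sub>v n"
    using X B unfolding Xw by (simp add: mult_mat_vec_zero)
  finally show ?thesis
    using det_0_iff_vec_prod_zero_field[OF G] nonsing w by blast
qed

lemma adj_mat_dual_frame:
  fixes B X Y :: "'a::comm_ring_1 mat"
  assumes B: "B \<in> carrier_mat m m" and sym: "transpose_mat B = B"
    and X: "X \<in> carrier_mat m n" and Y: "Y \<in> carrier_mat n m" and YX: "Y * X = 1\<^sub>m n"
  defines "Z \<equiv> adj_mat B * transpose_mat Y"
  shows "transpose_mat X * B * Z = det B \<cdot>\<^sub>m 1\<^sub>m n"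
    and "transpose_mat Z * B * X = det B \<cdot>\<^sub>m 1\<^sub>m n"
proof -
  have adj: "adj_mat B \<in> carrier_mat m m" "B * adj_mat B = det B \<cdot>\<^sub>m 1\<^sub>m m"
    using adj_mat[OF B] by auto
  have XT: "transpose_mat X \<in> carrier_mat n m" and YT: "transpose_mat Y \<in> carrier_mat m n"
    using X Y by auto
  have "transpose_mat X * B * Z = transpose_mat X * (B * adj_mat B) * transpose_mat Y"
    unfolding Z_def using XT B adj(1) YT by (simp add: assoc_mult_mat[of _ n m _ m _ n])
  also have "\<dots> = (det B \<cdot>\<^sub>m transpose_mat X) * transpose_mat Y"
    unfolding adj(2) mult_smult_distrib[OF XT one_carrier_mat] using XT by simp
  also have "\<dots> = det B \<cdot>\<^sub>m (transpose_mat X * transpose_mat Y)"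
    by (rule mult_smult_assoc_mat[OF XT YT])
  also have "\<dots> = det B \<cdot>\<^sub>m (transpose_mat (Y * X))"
    using transpose_mult[OF Y X] by simp
  finally show XBZ: "transpose_mat X * B * Z = det B \<cdot>\<^sub>m 1\<^sub>m n"
    unfolding YX by simp
  have Z: "Z \<in> carrier_mat m n"
    unfolding Z_def using adj(1) YT by simp
  have ZT: "transpose_mat Z \<in> carrier_mat n m"
    using Z by simp
  have "transpose_mat (transpose_mat X * B * Z) = transpose_mat Z * transpose_mat (transpose_mat X * B)"
    by (rule transpose_mult[OF mult_carrier_mat[OF XT B] Z])
  also have "transpose_mat (transpose_mat X * B) = B * X"
    using transpose_mult[OF XT B] sym by simp
  also have "transpose_mat Z * (B * X) = transpose_mat Z * B * X"
    by (rule assoc_mult_mat[OF ZT B X, symmetric])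
  finally have "transpose_mat Z * B * X = transpose_mat (transpose_mat X * B * Z)" ..
  then show "transpose_mat Z * B * X = det B \<cdot>\<^sub>m 1\<^sub>m n"
    unfolding XBZ by auto
qed

lemma dual_frame_dependency_eigenvector:
  fixes B X Z :: "'a::field mat"
  assumes B: "B \<in> carrier_mat m m" and X: "X \<in> carrier_mat m n" and Z: "Z \<in> carrier_mat m n"
    and XBX: "transpose_mat X * B * X = c \<cdot>\<^sub>m 1\<^sub>m n" and "c \<noteq> 0"
    and XBZ: "transpose_mat X * B * Z = d \<cdot>\<^sub>m 1\<^sub>m n"
    and ZBX: "transpose_mat Z * B * X = d \<cdot>\<^sub>m 1\<^sub>m n"
    and a: "a \<in> carrier_vec n" and b: "b \<in> carrier_vec n"
    and nontrivial: "a \<noteq> 0\<^sub>v n \<or> b \<noteq> 0\<^sub>v n" and dep: "X *\<^sub>v a + Z *\<^sub>v b = 0\<^sub>v m"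
  shows "b \<noteq> 0\<^sub>v n" and "(transpose_mat Z * B * Z) *\<^sub>v b = (d * d / c) \<cdot>\<^sub>v b"
proof -
  let ?C = "transpose_mat Z * B * Z"
  have expand: "(P * B * X) *\<^sub>v a + (P * B * Z) *\<^sub>v b = 0\<^sub>v n" if P: "P \<in> carrier_mat n m" for P
  proof -
    have PB: "P * B \<in> carrier_mat n m"
      using P B by simp
    have "(P * B * X) *\<^sub>v a + (P * B * Z) *\<^sub>v b = (P * B) *\<^sub>v (X *\<^sub>v a + Z *\<^sub>v b)"
      using PB X Z a b by (simp add: mult_add_distrib_mat_vec[OF PB])
    then show ?thesis
      using PB unfolding dep by (simp add: mult_mat_vec_zero)
  qed
  have "(c \<cdot>\<^sub>m 1\<^sub>m n) *\<^sub>v a + (d \<cdot>\<^sub>m 1\<^sub>m n) *\<^sub>v b = 0\<^sub>v n"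
    using expand[of "transpose_mat X"] X unfolding XBX XBZ by simp
  then have first: "c * a $ i + d * b $ i = 0" if "i < n" for i
    using that a b by (auto simp: smult_mat_mult_mat_vec[OF one_carrier_mat] vec_eq_iff)
  have "(d \<cdot>\<^sub>m 1\<^sub>m n) *\<^sub>v a + ?C *\<^sub>v b = 0\<^sub>v n"
    using expand[of "transpose_mat Z"] Z unfolding ZBX by simp
  then have second: "d * a $ i + (?C *\<^sub>v b) $ i = 0" if "i < n" for i
    using that a b B Z by (auto simp: smult_mat_mult_mat_vec[OF one_carrier_mat] vec_eq_iff)
  show "b \<noteq> 0\<^sub>v n"
  proof
    assume "b = 0\<^sub>v n"
    then have "a = 0\<^sub>v n"
      using first a \<open>c \<noteq> 0\<close> by (auto simp: vec_eq_iff)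
    then show False
      using nontrivial \<open>b = 0\<^sub>v n\<close> by simp
  qed
  have "(?C *\<^sub>v b) $ i = (d * d / c) * b $ i" if "i < n" for i
    using first[OF that] second[OF that] \<open>c \<noteq> 0\<close>
    by (simp add: field_simps) (metis mult.left_commute mult_minus_right neg_eq_iff_add_eq_0)
  then show "?C *\<^sub>v b = (d * d / c) \<cdot>\<^sub>v b"
    using B Z b by (intro eq_vecI) auto
qed

section \<open>The hyperbolic lattice\<close>

text \<open>The Gram matrix of the orthogonal sum of \<open>n\<close> hyperbolic planes, in the basis
  \<open>e\<^sub>1, \<dots>, e\<^sub>n, f\<^sub>1, \<dots>, f\<^sub>n\<close> with \<open>B(e\<^sub>i, f\<^sub>i) = 1\<close>.\<close>

definition hyperbolic_mat :: "nat \<Rightarrow> 'a::{zero,one} mat" where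
  "hyperbolic_mat n = four_block_mat (0\<^sub>m n n) (1\<^sub>m n) (1\<^sub>m n) (0\<^sub>m n n)"

lemma dim_hyperbolic_mat [simp]:
  "dim_row (hyperbolic_mat n) = 2 * n" "dim_col (hyperbolic_mat n) = 2 * n"
  unfolding hyperbolic_mat_def by simp_all

lemma hyperbolic_mat_carrier: "hyperbolic_mat n \<in> carrier_mat (2 * n) (2 * n)"
  by (rule carrier_matI) simp_all

lemma transpose_hyperbolic_mat: "transpose_mat (hyperbolic_mat n) = hyperbolic_mat n"
  unfolding hyperbolic_mat_def by (subst transpose_four_block_mat) auto

lemma hyperbolic_mat_mult_append_rows:
  fixes P Q :: "'a::semiring_1 mat"
  assumes "P \<in> carrier_mat n k" "Q \<in> carrier_mat n k"
  shows "hyperbolic_mat n * (P @\<^sub>r Q) = Q @\<^sub>r P"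
  unfolding hyperbolic_mat_def append_rows_def carrier_matD(1)[OF assms(1)] carrier_matD(1)[OF assms(2)]
  using assms by (subst mult_four_block_mat[OF zero_carrier_mat one_carrier_mat one_carrier_mat zero_carrier_mat
        assms(1) zero_carrier_mat assms(2) zero_carrier_mat]) auto

lemma hyperbolic_mat_squared: "hyperbolic_mat n * hyperbolic_mat n = (1\<^sub>m (2 * n) :: 'a::semiring_1 mat)"
proof -
  have "hyperbolic_mat n * hyperbolic_mat n = four_block_mat (1\<^sub>m n) (0\<^sub>m n n) (0\<^sub>m n n) (1\<^sub>m n :: 'a mat)"
    unfolding hyperbolic_mat_def
    by (subst mult_four_block_mat[OF zero_carrier_mat one_carrier_mat one_carrier_mat zero_carrier_mat
          zero_carrier_mat one_carrier_mat one_carrier_mat zero_carrier_mat]) auto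
  also have "\<dots> = 1\<^sub>m (2 * n)"
    by (rule eq_matI) (auto simp: four_block_mat_def mult_2)
  finally show ?thesis .
qed

lemma det_hyperbolic_mat: "det (hyperbolic_mat n :: 'a::field mat) \<noteq> 0"
proof -
  have "det (hyperbolic_mat n * hyperbolic_mat n :: 'a mat) = det (hyperbolic_mat n :: 'a mat) * det (hyperbolic_mat n)"
    by (rule det_mult[OF hyperbolic_mat_carrier hyperbolic_mat_carrier])
  then show ?thesis
    by (auto simp: hyperbolic_mat_squared)
qed

definition upper_half :: "'a::field mat \<Rightarrow> 'a mat" where
  "upper_half A = mat (dim_row A) (dim_col A)
     (\<lambda>(i, j). if i < j then A $$ (i, j) else if i = j then A $$ (i, j) / 2 else 0)"

lemma upper_half_carrier: "A \<in> carrier_mat n n \<Longrightarrow> upper_half A \<in> carrier_mat n n"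
  unfolding upper_half_def by auto

lemma upper_half_plus_transpose:
  fixes A :: "'a::field mat"
  assumes A: "A \<in> carrier_mat n n" and sym: "transpose_mat A = A" and two: "(2::'a) \<noteq> 0"
  shows "upper_half A + transpose_mat (upper_half A) = A"
proof (rule eq_matI)
  fix i j assume "i < dim_row A" "j < dim_col A"
  moreover have "A $$ (j, i) = A $$ (i, j)" if "i < n" "j < n"
    using arg_cong[OF sym, of "\<lambda>M. M $$ (i, j)"] that A by simp
  ultimately show "(upper_half A + transpose_mat (upper_half A)) $$ (i, j) = A $$ (i, j)"
    using A two by (auto simp: upper_half_def)
qed (use A in \<open>auto simp: upper_half_def\<close>)

lemma gram_hyperbolic_mat_graph:
  fixes U :: "'a::comm_semiring_1 mat"
  assumes U: "U \<in> carrier_mat n n"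
  shows "transpose_mat (1\<^sub>m n @\<^sub>r U) * hyperbolic_mat n * (1\<^sub>m n @\<^sub>r U) = U + transpose_mat U"
proof -
  have X: "1\<^sub>m n @\<^sub>r U \<in> carrier_mat (n + n) n"
    using U by auto
  have H: "hyperbolic_mat n \<in> carrier_mat (n + n) (n + n)"
    using hyperbolic_mat_carrier[of n] by (simp add: mult_2)
  have "transpose_mat (1\<^sub>m n @\<^sub>r U) * hyperbolic_mat n * (1\<^sub>m n @\<^sub>r U)
      = transpose_mat (1\<^sub>m n @\<^sub>r U) * (hyperbolic_mat n * (1\<^sub>m n @\<^sub>r U))"
    using X H by (intro assoc_mult_mat) auto
  also have "\<dots> = transpose_mat (1\<^sub>m n @\<^sub>r U) * (U @\<^sub>r 1\<^sub>m n)"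
    using hyperbolic_mat_mult_append_rows[OF one_carrier_mat U] by simp
  also have "\<dots> = U + transpose_mat U"
    using U by (simp add: transpose_append_rows_mult_append_rows[of _ n n])
  finally show ?thesis .
qed

section \<open>Integrality over the valuation ring\<close>

definition integral_mat :: "('a::field \<Rightarrow> int) \<Rightarrow> 'a mat \<Rightarrow> bool" where
  "integral_mat v A \<longleftrightarrow> (\<forall>i<dim_row A. \<forall>j<dim_col A. intR v (A $$ (i, j)))"

lemma integral_matI:
  "(\<And>i j. i < dim_row A \<Longrightarrow> j < dim_col A \<Longrightarrow> intR v (A $$ (i, j))) \<Longrightarrow> integral_mat v A"
  unfolding integral_mat_def by blast

lemma integral_matD: "integral_mat v A \<Longrightarrow> i < dim_row A \<Longrightarrow> j < dim_col A \<Longrightarrow> intR v (A $$ (i, j))"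
  unfolding integral_mat_def by blast

lemma integral_mat_transpose [simp]: "integral_mat v (transpose_mat A) \<longleftrightarrow> integral_mat v A"
  unfolding integral_mat_def by auto

lemma R_vecs_carrier: "x \<in> R_vecs v n \<Longrightarrow> x \<in> carrier_vec n"
  by (simp add: R_vecs_def)

lemma rep_image_graph:
  assumes U: "U \<in> carrier_mat k n"
  shows "rep_image v (1\<^sub>m n @\<^sub>r U) = (\<lambda>c. c @\<^sub>v U *\<^sub>v c) ` R_vecs v n"
proof -
  have "dim_col (1\<^sub>m n @\<^sub>r U) = n"
    using U by (simp add: append_rows_def)
  then show ?thesis
    unfolding rep_image_def setcompr_eq_image using mat_mult_append[OF one_carrier_mat U]
    by (intro image_cong) (auto dest: R_vecs_carrier)
qed

locale discretely_valued =
  fixes v :: "'a::field \<Rightarrow> int"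
  assumes discrete_valuation: "discrete_valuation v"
begin

lemma v_mult: "x \<noteq> 0 \<Longrightarrow> y \<noteq> 0 \<Longrightarrow> v (x * y) = v x + v y"
  using discrete_valuation unfolding discrete_valuation_def by blast

lemma v_one [simp]: "v 1 = 0"
  using v_mult[of 1 1] by simp

lemma v_inverse: "x \<noteq> 0 \<Longrightarrow> v (inverse x) = - v x"
  using v_mult[of x "inverse x"] by simp

lemma v_uminus: "x \<noteq> 0 \<Longrightarrow> v (- x) = v x"
  using v_mult[of "-1" "-1"] v_mult[of "-1" x] by simp

lemma vge_add: "vge v x N \<Longrightarrow> vge v y N \<Longrightarrow> vge v (x + y) N"
  using discrete_valuation unfolding discrete_valuation_def vge_def
  by (metis add.right_neutral add_0 min.bounded_iff order.trans)

lemma vge_mult: "vge v x N \<Longrightarrow> vge v y M \<Longrightarrow> vge v (x * y) (N + M)"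
  unfolding vge_def by (cases "x = 0 \<or> y = 0") (auto simp: v_mult)

lemma vge_0 [simp]: "vge v 0 N"
  unfolding vge_def by simp

lemma vge_sum: "(\<And>i. i \<in> S \<Longrightarrow> vge v (f i) N) \<Longrightarrow> vge v (sum f S) N"
  by (induction S rule: infinite_finite_induct) (auto intro: vge_add)

lemma intR_iff: "intR v x \<longleftrightarrow> x = 0 \<or> 0 \<le> v x"
  unfolding intR_def vge_def ..

lemma intR_0 [simp]: "intR v 0" and intR_1 [simp]: "intR v 1"
  by (simp_all add: intR_iff)

lemma intR_add: "intR v x \<Longrightarrow> intR v y \<Longrightarrow> intR v (x + y)"
  unfolding intR_def by (rule vge_add)

lemma intR_mult: "intR v x \<Longrightarrow> intR v y \<Longrightarrow> intR v (x * y)"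
  unfolding intR_def using vge_mult[of x 0 y 0] by simp

lemma intR_uminus: "intR v x \<Longrightarrow> intR v (- x)"
  by (cases "x = 0") (auto simp: intR_iff v_uminus)

lemma intR_diff: "intR v x \<Longrightarrow> intR v y \<Longrightarrow> intR v (x - y)"
  using intR_add[of x "- y"] intR_uminus[of y] by simp

lemma intR_sum: "(\<And>i. i \<in> S \<Longrightarrow> intR v (f i)) \<Longrightarrow> intR v (sum f S)"
  unfolding intR_def by (rule vge_sum)

lemma intR_prod: "(\<And>i. i \<in> S \<Longrightarrow> intR v (f i)) \<Longrightarrow> intR v (prod f S)"
  by (induction S rule: infinite_finite_induct) (auto intro: intR_mult)

lemma intR_power: "intR v x \<Longrightarrow> intR v (x ^ k)"
  by (induction k) (auto intro: intR_mult)

lemma not_intR_inverse_uniformizer: "p \<noteq> 0 \<Longrightarrow> v p = 1 \<Longrightarrow> \<not> intR v (inverse p)"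
  by (simp add: intR_iff v_inverse)

lemma intR_inverse_2:
  assumes "nondyadic v" shows "intR v (inverse 2)"
  using assms v_inverse[of 2] unfolding nondyadic_def intR_iff by simp

lemma integral_mat_0 [simp]: "integral_mat v (0\<^sub>m n k)"
  by (rule integral_matI) simp

lemma integral_mat_1 [simp]: "integral_mat v (1\<^sub>m n)"
  by (rule integral_matI) simp

lemma integral_mat_smult: "intR v c \<Longrightarrow> integral_mat v A \<Longrightarrow> integral_mat v (c \<cdot>\<^sub>m A)"
  by (auto intro!: integral_matI intR_mult dest: integral_matD)

lemma integral_mat_mult:
  assumes "integral_mat v A" "integral_mat v B" "dim_col A = dim_row B"
  shows "integral_mat v (A * B)"
  using assms unfolding integral_mat_def by (auto simp: scalar_prod_def intro!: intR_sum intR_mult)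

lemma integral_mat_four_block_mat:
  assumes "integral_mat v A" "integral_mat v B" "integral_mat v C" "integral_mat v D"
    and "A \<in> carrier_mat nr1 nc1" "B \<in> carrier_mat nr1 nc2"
    and "C \<in> carrier_mat nr2 nc1" "D \<in> carrier_mat nr2 nc2"
  shows "integral_mat v (four_block_mat A B C D)"
  using assms unfolding integral_mat_def by (auto simp: four_block_mat_def Let_def)

lemma mult_mat_vec_R_vecs:
  assumes "integral_mat v A" "A \<in> carrier_mat m k" "x \<in> R_vecs v k"
  shows "A *\<^sub>v x \<in> R_vecs v m"
  using assms
  by (auto simp: R_vecs_def scalar_prod_def intro!: intR_sum intR_mult dest: integral_matD)

lemma zero_R_vecs: "0\<^sub>v n \<in> R_vecs v n"
  by (simp add: R_vecs_def)

lemma R_vecs_smult: "intR v c \<Longrightarrow> x \<in> R_vecs v n \<Longrightarrow> c \<cdot>\<^sub>v x \<in> R_vecs v n"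
  by (auto simp: R_vecs_def intro!: intR_mult)

lemma R_vecs_add: "x \<in> R_vecs v n \<Longrightarrow> y \<in> R_vecs v n \<Longrightarrow> x + y \<in> R_vecs v n"
  by (auto simp: R_vecs_def intro!: intR_add)

lemma R_vecs_minus: "x \<in> R_vecs v n \<Longrightarrow> y \<in> R_vecs v n \<Longrightarrow> x - y \<in> R_vecs v n"
  by (auto simp: R_vecs_def intro!: intR_diff)

lemma unit_vec_R_vecs: "i < m \<Longrightarrow> unit_vec m i \<in> R_vecs v m"
  by (simp add: R_vecs_def unit_vec_def)

lemma append_vec_R_vecs_iff:
  assumes "x \<in> carrier_vec n" "y \<in> carrier_vec k"
  shows "x @\<^sub>v y \<in> R_vecs v (n + k) \<longleftrightarrow> x \<in> R_vecs v n \<and> y \<in> R_vecs v k"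
proof -
  have "(\<forall>i<n + k. intR v ((x @\<^sub>v y) $ i)) \<longleftrightarrow> (\<forall>i<n. intR v (x $ i)) \<and> (\<forall>i<k. intR v (y $ i))"
    using assms by (auto, metis add_diff_cancel_left' nat_add_left_cancel_less not_add_less1)
  then show ?thesis
    using assms by (simp add: R_vecs_def)
qed

lemma intR_det:
  assumes A: "A \<in> carrier_mat n n" and "integral_mat v A"
  shows "intR v (det A)"
  unfolding det_def'[OF A]
proof (intro intR_sum intR_mult intR_prod)
  fix p i assume "p \<in> {p. p permutes {0..<n}}" "i \<in> {0..<n}"
  then show "intR v (A $$ (i, p i))"
    using A \<open>integral_mat v A\<close> by (auto intro: integral_matD permutes_in_image)
qed (auto simp: sign_def intro: intR_uminus)

lemma integral_mat_adj:
  assumes A: "A \<in> carrier_mat n n" and "integral_mat v A"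
  shows "integral_mat v (adj_mat A)"
proof (rule integral_matI)
  fix i j assume "i < dim_row (adj_mat A)" "j < dim_col (adj_mat A)"
  then have ij: "i < n" "j < n" using adj_mat(1)[OF A] by auto
  have "integral_mat v (mat_delete A j i)"
    using assms ij unfolding integral_mat_def by (auto simp: mat_delete_def)
  then have "intR v (det (mat_delete A j i))"
    using mat_delete_carrier[OF A] by (rule intR_det[rotated])
  then show "intR v (adj_mat A $$ (i, j))"
    using A ij by (auto simp: adj_mat_def cofactor_def intro!: intR_mult intR_power intR_uminus)
qed

lemma R_submodule_mult_mat_vec:
  assumes N: "R_submodule v m N" and M: "M \<in> carrier_mat m k"
    and cols: "\<And>j. j < k \<Longrightarrow> col M j \<in> N" and r: "r \<in> R_vecs v k"
  shows "M *\<^sub>v r \<in> N"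
proof -
  have zero: "0\<^sub>v m \<in> N" and add: "\<And>x y. x \<in> N \<Longrightarrow> y \<in> N \<Longrightarrow> x + y \<in> N"
    and smult: "\<And>c x. intR v c \<Longrightarrow> x \<in> N \<Longrightarrow> c \<cdot>\<^sub>v x \<in> N"
    using N unfolding R_submodule_def by blast+
  have r_int: "\<And>i. i < k \<Longrightarrow> intR v (r $ i)"
    using r unfolding R_vecs_def by blast
  define r_upto where "r_upto l = vec k (\<lambda>i. if i < l then r $ i else 0)" for l
  have "M *\<^sub>v r_upto l \<in> N" if "l \<le> k" for l
    using that
  proof (induction l)
    case 0
    have "M *\<^sub>v r_upto 0 = 0\<^sub>v m"
      using M by (intro eq_vecI) (auto simp: r_upto_def scalar_prod_def)
    then show ?case
      using zero by simp
  next
    case (Suc l)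
    then have l: "l < k"
      by simp
    have "r_upto (Suc l) = r_upto l + r $ l \<cdot>\<^sub>v unit_vec k l"
      by (intro eq_vecI) (auto simp: r_upto_def unit_vec_def not_less_less_Suc_eq)
    then have "M *\<^sub>v r_upto (Suc l) = M *\<^sub>v r_upto l + M *\<^sub>v (r $ l \<cdot>\<^sub>v unit_vec k l)"
      using mult_add_distrib_mat_vec[OF M] by (simp add: r_upto_def)
    also have "M *\<^sub>v (r $ l \<cdot>\<^sub>v unit_vec k l) = r $ l \<cdot>\<^sub>v col M l"
      using mult_mat_vec[OF M unit_vec_carrier] mult_mat_vec_unit_vec[OF M l] by simp
    finally show ?case
      using add[OF Suc.IH smult[OF r_int cols]] l by simp
  qed
  moreover have "r_upto k = r"
    using r by (intro eq_vecI) (auto simp: r_upto_def R_vecs_def)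
  ultimately show ?thesis
    by fastforce
qed

lemma complement_projection_mat:
  assumes X: "X \<in> carrier_mat m n" and N: "R_submodule v m N"
    and span: "R_vecs v m = {x + y | x y. x \<in> rep_image v X \<and> y \<in> N}"
  obtains Y where "Y \<in> carrier_mat n m" "integral_mat v Y"
    "\<And>x. x \<in> R_vecs v m \<Longrightarrow> x - X *\<^sub>v (Y *\<^sub>v x) \<in> N"
proof -
  have img: "rep_image v X = {X *\<^sub>v c | c. c \<in> R_vecs v n}"
    using X by (simp add: rep_image_def)
  have "\<exists>f. f \<in> R_vecs v n \<and> unit_vec m i - X *\<^sub>v f \<in> N" if i: "i < m" for i
  proof -
    obtain f y where f: "f \<in> R_vecs v n" and y: "y \<in> N" and e: "unit_vec m i = X *\<^sub>v f + y"
      using unit_vec_R_vecs[OF i] unfolding span img by blast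
    have "y \<in> carrier_vec m"
      using y N by (auto simp: R_submodule_def R_vecs_def)
    then have "unit_vec m i - X *\<^sub>v f = y"
      using X unfolding e by auto
    then show ?thesis
      using f y by auto
  qed
  then obtain f where f: "\<And>i. i < m \<Longrightarrow> f i \<in> R_vecs v n \<and> unit_vec m i - X *\<^sub>v f i \<in> N"
    by metis
  define Y where "Y = mat n m (\<lambda>(j, i). f i $ j)"
  have Y: "Y \<in> carrier_mat n m"
    unfolding Y_def by simp
  have col_Y: "col Y i = f i" if "i < m" for i
    using f[OF that] that unfolding Y_def by (intro eq_vecI) (auto simp: R_vecs_def)
  have "x - X *\<^sub>v (Y *\<^sub>v x) \<in> N" if x: "x \<in> R_vecs v m" for x
  proof -
    have "(1\<^sub>m m - X * Y) *\<^sub>v x \<in> N"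
    proof (rule R_submodule_mult_mat_vec[OF N _ _ x])
      fix i assume i: "i < m"
      have "col (1\<^sub>m m - X * Y) i = unit_vec m i - X *\<^sub>v f i"
        using X Y i col_Y[OF i] by (intro eq_vecI) auto
      then show "col (1\<^sub>m m - X * Y) i \<in> N"
        using f[OF i] by simp
    qed (use X Y in auto)
    moreover have "(1\<^sub>m m - X * Y) *\<^sub>v x = x - X *\<^sub>v (Y *\<^sub>v x)"
      using minus_mult_distrib_mat_vec[of "1\<^sub>m m" m m "X * Y" x] X Y x by (simp add: R_vecs_def)
    ultimately show ?thesis
      by simp
  qed
  moreover have "integral_mat v Y"
    using f unfolding Y_def integral_mat_def by (auto simp: R_vecs_def)
  ultimately show thesis
    using that Y by blast
qed

lemma direct_summand_left_inverse:
  assumes X: "X \<in> carrier_mat m n" and X_int: "integral_mat v X"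
    and inj: "\<And>w. w \<in> carrier_vec n \<Longrightarrow> X *\<^sub>v w = 0\<^sub>v m \<Longrightarrow> w = 0\<^sub>v n"
    and ds: "direct_summand v m (rep_image v X)"
  obtains Y where "Y \<in> carrier_mat n m" "integral_mat v Y" "Y * X = 1\<^sub>m n"
proof -
  obtain N where N: "R_submodule v m N" and meet: "rep_image v X \<inter> N = {0\<^sub>v m}"
    and span: "R_vecs v m = {x + y | x y. x \<in> rep_image v X \<and> y \<in> N}"
    using ds unfolding direct_summand_def by blast
  obtain Y where Y: "Y \<in> carrier_mat n m" and Y_int: "integral_mat v Y"
    and proj: "\<And>x. x \<in> R_vecs v m \<Longrightarrow> x - X *\<^sub>v (Y *\<^sub>v x) \<in> N"
    using complement_projection_mat[OF X N span] by blast
  have YX_unit: "(Y * X) *\<^sub>v unit_vec n j = unit_vec n j" if j: "j < n" for j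
  proof -
    let ?w = "unit_vec n j - (Y * X) *\<^sub>v unit_vec n j"
    have w: "?w \<in> R_vecs v n"
      using mult_mat_vec_R_vecs[OF integral_mat_mult[OF Y_int X_int] _ unit_vec_R_vecs[OF j]]
        unit_vec_R_vecs[OF j] X Y by (intro R_vecs_minus) auto
    have Xe: "X *\<^sub>v unit_vec n j \<in> R_vecs v m"
      by (rule mult_mat_vec_R_vecs[OF X_int X unit_vec_R_vecs[OF j]])
    have "X *\<^sub>v ?w = X *\<^sub>v unit_vec n j - X *\<^sub>v (Y *\<^sub>v (X *\<^sub>v unit_vec n j))"
      using X Y by (simp add: mult_minus_distrib_mat_vec)
    then have "X *\<^sub>v ?w \<in> N"
      using proj[OF Xe] by simp
    moreover have "X *\<^sub>v ?w \<in> rep_image v X"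
      unfolding rep_image_def using w X by (intro CollectI exI[of _ ?w]) auto
    ultimately have "X *\<^sub>v ?w = 0\<^sub>v m"
      using meet by blast
    then have "?w = 0\<^sub>v n"
      using inj Y X by simp
    then show ?thesis
      using X Y by (auto simp: vec_eq_iff)
  qed
  have "Y * X = 1\<^sub>m n"
    using YX_unit Y X by (intro mat_eq_one_mat_if_fixes_unit_vecs) auto
  then show thesis
    using that Y Y_int by blast
qed

lemma intR_eigenvalue:
  assumes C: "C \<in> carrier_mat n n" "integral_mat v C"
    and b: "b \<in> carrier_vec n" "b \<noteq> 0\<^sub>v n" and eigen: "C *\<^sub>v b = \<mu> \<cdot>\<^sub>v b"
  shows "intR v \<mu>"
proof (cases "\<mu> = 0")
  case False
  define S where "S = {i. i < n \<and> b $ i \<noteq> 0}"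
  have "finite S" "S \<noteq> {}"
    using b by (auto simp: S_def vec_eq_iff)
  define l where "l = arg_min_on (\<lambda>i. v (b $ i)) S"
  have l: "l < n" "b $ l \<noteq> 0" and least: "\<And>i. i \<in> S \<Longrightarrow> v (b $ l) \<le> v (b $ i)"
    using arg_min_if_finite[OF \<open>finite S\<close> \<open>S \<noteq> {}\<close>, of "\<lambda>i. v (b $ i)"]
    unfolding l_def[symmetric] by (auto simp: S_def not_less) (meson leD)
  have "vge v (C $$ (l, j) * b $ j) (0 + v (b $ l))" if "j < n" for j
  proof (rule vge_mult)
    show "vge v (C $$ (l, j)) 0"
      using C l that unfolding integral_mat_def intR_def by auto
    show "vge v (b $ j) (v (b $ l))"
      using least[of j] that unfolding S_def vge_def by auto
  qed
  then have "vge v (\<Sum>j = 0..<n. C $$ (l, j) * b $ j) (v (b $ l))"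
    by (auto intro: vge_sum)
  moreover have "(\<Sum>j = 0..<n. C $$ (l, j) * b $ j) = \<mu> * b $ l"
    using arg_cong[OF eigen, of "\<lambda>w. w $ l"] C b l by (simp add: scalar_prod_def)
  ultimately show ?thesis
    using False l by (simp add: vge_def intR_iff v_mult)
qed simp

lemma R_submodule_zero_append:
  "R_submodule v (n + k) ((\<lambda>y. 0\<^sub>v n @\<^sub>v y) ` R_vecs v k)" (is "R_submodule v _ ?N")
  unfolding R_submodule_def
proof (intro conjI ballI allI impI)
  have zero: "0\<^sub>v (n + k) = 0\<^sub>v n @\<^sub>v (0\<^sub>v k :: 'a vec)"
    by (intro eq_vecI) auto
  show "?N \<subseteq> R_vecs v (n + k)"
    using append_vec_R_vecs_iff[OF zero_carrier_vec R_vecs_carrier] zero_R_vecs by blast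
  show "0\<^sub>v (n + k) \<in> ?N"
    unfolding zero using zero_R_vecs by blast
  show "x + y \<in> ?N" if xy: "x \<in> ?N" "y \<in> ?N" for x y
  proof -
    obtain y1 y2 where y12: "y1 \<in> R_vecs v k" "y2 \<in> R_vecs v k"
      and "x = 0\<^sub>v n @\<^sub>v y1" "y = 0\<^sub>v n @\<^sub>v y2"
      using xy by blast
    then have "x + y = 0\<^sub>v n @\<^sub>v (y1 + y2)"
      using append_vec_add[OF zero_carrier_vec zero_carrier_vec R_vecs_carrier R_vecs_carrier] by simp
    then show ?thesis
      using R_vecs_add[OF y12] by blast
  qed
  show "c \<cdot>\<^sub>v x \<in> ?N" if c: "intR v c" and x: "x \<in> ?N" for c x
  proof -
    obtain y where y: "y \<in> R_vecs v k" and "x = 0\<^sub>v n @\<^sub>v y"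
      using x by blast
    moreover have "c \<cdot>\<^sub>v 0\<^sub>v n = (0\<^sub>v n :: 'a vec)"
      by (intro eq_vecI) auto
    ultimately have "c \<cdot>\<^sub>v x = 0\<^sub>v n @\<^sub>v (c \<cdot>\<^sub>v y)"
      by (simp add: smult_append_vec)
    then show ?thesis
      using R_vecs_smult[OF c y] by blast
  qed
qed

lemma R_vecs_graph_decomposition:
  assumes U: "U \<in> carrier_mat k n" and U_int: "integral_mat v U" and z: "z \<in> R_vecs v (n + k)"
  obtains c y where "c \<in> R_vecs v n" "y \<in> R_vecs v k" "z = (c @\<^sub>v U *\<^sub>v c) + (0\<^sub>v n @\<^sub>v y)"
proof -
  define c y where "c = vec_first z n" and "y = vec_last z k"
  have z_eq: "z = c @\<^sub>v y"
    using R_vecs_carrier[OF z] by (simp add: c_def y_def)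
  then have c: "c \<in> R_vecs v n" and y: "y \<in> R_vecs v k"
    using z append_vec_R_vecs_iff[of c n y k] by (auto simp: c_def y_def)
  note carriers = R_vecs_carrier[OF c] R_vecs_carrier[OF y] U
  have "(c @\<^sub>v U *\<^sub>v c) + (0\<^sub>v n @\<^sub>v (y - U *\<^sub>v c)) = (c + 0\<^sub>v n) @\<^sub>v (U *\<^sub>v c + (y - U *\<^sub>v c))"
    by (rule append_vec_add[of _ n _ _ k]) (use carriers in auto)
  also have "\<dots> = z"
    unfolding z_eq using carriers by (auto intro!: arg_cong2[where f = append_vec])
  finally show thesis
    using that c R_vecs_minus[OF y mult_mat_vec_R_vecs[OF U_int U c]] by metis
qed

lemma direct_summand_graph:
  assumes U: "U \<in> carrier_mat k n" and U_int: "integral_mat v U"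
  shows "direct_summand v (n + k) (rep_image v (1\<^sub>m n @\<^sub>r U))"
proof -
  define N where "N = (\<lambda>y. 0\<^sub>v n @\<^sub>v y) ` R_vecs v k"
  have N: "R_submodule v (n + k) N"
    unfolding N_def by (rule R_submodule_zero_append)
  note img = rep_image_graph[OF U]
  have zero: "0\<^sub>v (n + k) = 0\<^sub>v n @\<^sub>v (0\<^sub>v k :: 'a vec)"
    by (intro eq_vecI) auto
  have graph_R_vecs: "c @\<^sub>v U *\<^sub>v c \<in> R_vecs v (n + k)" if "c \<in> R_vecs v n" for c
    using append_vec_R_vecs_iff[OF R_vecs_carrier R_vecs_carrier] that mult_mat_vec_R_vecs[OF U_int U that]
    by blast
  have "rep_image v (1\<^sub>m n @\<^sub>r U) \<inter> N \<subseteq> {0\<^sub>v (n + k)}"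
  proof
    fix x assume "x \<in> rep_image v (1\<^sub>m n @\<^sub>r U) \<inter> N"
    then obtain c y where c: "c \<in> R_vecs v n" and "c @\<^sub>v U *\<^sub>v c = 0\<^sub>v n @\<^sub>v y" "x = c @\<^sub>v U *\<^sub>v c"
      unfolding img N_def by auto
    moreover have "c = 0\<^sub>v n"
      using append_vec_eq[OF R_vecs_carrier[OF c] zero_carrier_vec] calculation(2) by blast
    ultimately show "x \<in> {0\<^sub>v (n + k)}"
      using U zero by (simp add: mult_mat_vec_zero)
  qed
  moreover have "0\<^sub>v (n + k) \<in> rep_image v (1\<^sub>m n @\<^sub>r U)"
    unfolding img zero using zero_R_vecs mult_mat_vec_zero[OF U] by (intro image_eqI[of _ _ "0\<^sub>v n"]) auto
  moreover have "R_vecs v (n + k) = {x + y | x y. x \<in> rep_image v (1\<^sub>m n @\<^sub>r U) \<and> y \<in> N}"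
  proof (intro equalityI subsetI)
    fix z assume "z \<in> R_vecs v (n + k)"
    then show "z \<in> {x + y | x y. x \<in> rep_image v (1\<^sub>m n @\<^sub>r U) \<and> y \<in> N}"
      using R_vecs_graph_decomposition[OF U U_int] unfolding img N_def by blast
  next
    fix z assume "z \<in> {x + y | x y. x \<in> rep_image v (1\<^sub>m n @\<^sub>r U) \<and> y \<in> N}"
    then show "z \<in> R_vecs v (n + k)"
      using N graph_R_vecs R_vecs_add unfolding img R_submodule_def by blast
  qed
  ultimately show ?thesis
    using N R_submodule_def unfolding direct_summand_def by blast
qed

section \<open>Primitively universal lattices\<close>

lemma R_lattice_iff:
  "R_lattice v n A \<longleftrightarrow>
     A \<in> carrier_mat n n \<and> transpose_mat A = A \<and> integral_mat v A \<and> det A \<noteq> 0"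
  unfolding R_lattice_def integral_mat_def by auto

lemma integral_mat_hyperbolic_mat: "integral_mat v (hyperbolic_mat n)"
  unfolding hyperbolic_mat_def
  by (rule integral_mat_four_block_mat[OF integral_mat_0 integral_mat_1 integral_mat_1 integral_mat_0
        zero_carrier_mat one_carrier_mat one_carrier_mat zero_carrier_mat])

lemma R_lattice_hyperbolic_mat: "R_lattice v (2 * n) (hyperbolic_mat n)"
  unfolding R_lattice_iff
  using hyperbolic_mat_carrier transpose_hyperbolic_mat integral_mat_hyperbolic_mat det_hyperbolic_mat
  by blast

lemma integral_mat_upper_half:
  assumes "nondyadic v" and A_int: "integral_mat v A"
  shows "integral_mat v (upper_half A)"
proof (rule integral_matI)
  fix i j assume ij: "i < dim_row (upper_half A)" "j < dim_col (upper_half A)"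
  then have entry: "intR v (A $$ (i, j))"
    using A_int by (simp add: integral_mat_def upper_half_def)
  moreover have "intR v (A $$ (i, j) / 2)"
    using intR_mult[OF entry intR_inverse_2[OF assms(1)]] by (simp only: divide_inverse)
  ultimately show "intR v (upper_half A $$ (i, j))"
    using ij by (auto simp: upper_half_def)
qed

lemma primitive_representation_hyperbolic_mat:
  assumes "nondyadic v" and "R_lattice v n A"
  shows "primitive_representation v A (hyperbolic_mat n) (1\<^sub>m n @\<^sub>r upper_half A)"
proof -
  have A: "A \<in> carrier_mat n n" and sym: "transpose_mat A = A" and A_int: "integral_mat v A"
    using assms(2) unfolding R_lattice_iff by blast+
  have two: "(2::'a) \<noteq> 0"
    using assms(1) by (simp add: nondyadic_def)
  have U: "upper_half A \<in> carrier_mat n n" and U_int: "integral_mat v (upper_half A)"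
    using upper_half_carrier[OF A] integral_mat_upper_half[OF assms(1) A_int] .
  have "integral_mat v (1\<^sub>m n @\<^sub>r upper_half A)"
    using integral_mat_four_block_mat[OF integral_mat_1 integral_mat_0 U_int integral_mat_0
        one_carrier_mat zero_carrier_mat U zero_carrier_mat] carrier_matD[OF U]
    unfolding append_rows_def by simp
  moreover have "1\<^sub>m n @\<^sub>r upper_half A \<in> carrier_mat (2 * n) n"
    using U by (auto simp: mult_2)
  moreover have "transpose_mat (1\<^sub>m n @\<^sub>r upper_half A) * hyperbolic_mat n * (1\<^sub>m n @\<^sub>r upper_half A) = A"
    unfolding gram_hyperbolic_mat_graph[OF U] using upper_half_plus_transpose[OF A sym two] .
  moreover have "direct_summand v (2 * n) (rep_image v (1\<^sub>m n @\<^sub>r upper_half A))"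
    unfolding mult_2 by (rule direct_summand_graph[OF U U_int])
  ultimately show ?thesis
    using A unfolding primitive_representation_def representation_def integral_mat_def by simp
qed

lemma prim_n_universal_hyperbolic_mat:
  "nondyadic v \<Longrightarrow> prim_n_universal v n (hyperbolic_mat n)"
  unfolding prim_n_universal_def using primitive_representation_hyperbolic_mat by blast

lemma primitive_representation_left_inverse:
  assumes rep: "primitive_representation v A B X"
    and B: "B \<in> carrier_mat m m" and A: "A \<in> carrier_mat n n" and "det A \<noteq> 0"
  obtains Y where "Y \<in> carrier_mat n m" "integral_mat v Y" "Y * X = 1\<^sub>m n"
proof -
  have X: "X \<in> carrier_mat m n" and X_int: "integral_mat v X"
    and gram: "transpose_mat X * B * X = A" and ds: "direct_summand v m (rep_image v X)"
    using rep B A unfolding primitive_representation_def representation_def integral_mat_def by auto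
  have "w = 0\<^sub>v n" if "w \<in> carrier_vec n" "X *\<^sub>v w = 0\<^sub>v m" for w
    using gram_nonsingular_mult_mat_vec_eq_0[OF X B _ that] gram \<open>det A \<noteq> 0\<close> by simp
  then show thesis
    using direct_summand_left_inverse[OF X X_int _ ds] that by blast
qed

lemma low_rank_primitive_scalar_representation:
  assumes L: "R_lattice v m B" and wide: "m < 2 * n" and "c \<noteq> 0"
    and X_rep: "primitive_representation v (c \<cdot>\<^sub>m 1\<^sub>m n) B X"
  shows "intR v (det B * det B / c)"
proof -
  have B: "B \<in> carrier_mat m m" and sym: "transpose_mat B = B" and B_int: "integral_mat v B"
    using L unfolding R_lattice_iff by blast+
  have X: "X \<in> carrier_mat m n" and XBX: "transpose_mat X * B * X = c \<cdot>\<^sub>m 1\<^sub>m n"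
    using X_rep B unfolding primitive_representation_def representation_def by auto
  obtain Y where Y: "Y \<in> carrier_mat n m" "integral_mat v Y" "Y * X = 1\<^sub>m n"
    using primitive_representation_left_inverse[OF X_rep B smult_carrier_mat[OF one_carrier_mat]]
      \<open>c \<noteq> 0\<close> by auto
  define Z where "Z = adj_mat B * transpose_mat Y"
  have Z: "Z \<in> carrier_mat m n" and Z_int: "integral_mat v Z"
    using Y integral_mat_adj[OF B B_int] adj_mat(1)[OF B] unfolding Z_def by (auto intro: integral_mat_mult)
  have XBZ: "transpose_mat X * B * Z = det B \<cdot>\<^sub>m 1\<^sub>m n"
    and ZBX: "transpose_mat Z * B * X = det B \<cdot>\<^sub>m 1\<^sub>m n"
    using adj_mat_dual_frame[OF B sym X Y(1,3)] unfolding Z_def by auto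
  obtain a b where ab: "a \<in> carrier_vec n" "b \<in> carrier_vec n" "a \<noteq> 0\<^sub>v n \<or> b \<noteq> 0\<^sub>v n"
    and dep: "X *\<^sub>v a + Z *\<^sub>v b = 0\<^sub>v m"
    using nontrivial_kernel_two_blocks[OF X Z] wide by auto
  have "b \<noteq> 0\<^sub>v n" and "(transpose_mat Z * B * Z) *\<^sub>v b = (det B * det B / c) \<cdot>\<^sub>v b"
    using dual_frame_dependency_eigenvector[OF B X Z XBX \<open>c \<noteq> 0\<close> XBZ ZBX ab dep] by blast+
  moreover have "integral_mat v (transpose_mat Z * B * Z)"
    using Z Z_int B B_int by (auto intro!: integral_mat_mult)
  ultimately show ?thesis
    using Z B ab(2) by (intro intR_eigenvalue[of "transpose_mat Z * B * Z" n]) auto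
qed

lemma prim_n_universal_rank_ge:
  assumes L: "R_lattice v m B" and U: "prim_n_universal v n B"
  shows "2 * n \<le> m"
proof (rule ccontr)
  assume "\<not> 2 * n \<le> m"
  then have wide: "m < 2 * n"
    by simp
  have B: "B \<in> carrier_mat m m" and B_int: "integral_mat v B" and "det B \<noteq> 0"
    using L unfolding R_lattice_iff by blast+
  obtain p where p: "p \<noteq> 0" "v p = 1"
    using discrete_valuation unfolding discrete_valuation_def by blast
  define c where "c = p * det B * det B"
  have "c \<noteq> 0"
    using p \<open>det B \<noteq> 0\<close> by (simp add: c_def)
  have "intR v p"
    using p by (simp add: intR_iff)
  then have "intR v c"
    using intR_det[OF B B_int] unfolding c_def by (intro intR_mult)
  then have "R_lattice v n (c \<cdot>\<^sub>m 1\<^sub>m n)"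
    using \<open>c \<noteq> 0\<close> unfolding R_lattice_iff by (auto intro!: integral_mat_smult)
  then obtain X where "primitive_representation v (c \<cdot>\<^sub>m 1\<^sub>m n) B X"
    using U unfolding prim_n_universal_def by blast
  then have "intR v (det B * det B / c)"
    by (rule low_rank_primitive_scalar_representation[OF L wide \<open>c \<noteq> 0\<close>])
  moreover have "det B * det B / c = inverse p"
    using \<open>det B \<noteq> 0\<close> p unfolding c_def by (simp add: field_simps)
  ultimately show False
    using not_intR_inverse_uniformizer[OF p] by simp
qed

end

theorem mainTheorem1:
  fixes v :: "'a::field \<Rightarrow> int" and n :: nat
  assumes "nonarch_local_field v" and "nondyadic v" and "0 < n"
  shows "(\<exists>B. R_lattice v (2 * n) B \<and> prim_n_universal v n B) \<and> u_star v n = 2 * n"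
proof -
  \<comment> \<open>only the discrete valuation is used\<close>
  interpret discretely_valued v
    using assms(1) by unfold_locales (simp add: nonarch_local_field_def)
  have hyperbolic: "R_lattice v (2 * n) (hyperbolic_mat n) \<and> prim_n_universal v n (hyperbolic_mat n)"
    using R_lattice_hyperbolic_mat prim_n_universal_hyperbolic_mat[OF assms(2)] by blast
  moreover have "u_star v n = 2 * n"
    unfolding u_star_def
  proof (rule Least_equality)
    show "\<exists>B. R_lattice v (2 * n) B \<and> prim_n_universal v n B"
      using hyperbolic by blast
  qed (use prim_n_universal_rank_ge in blast)
  ultimately show ?thesis
    by blast
qed

end
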